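(* For any $n\in\mathbb{N}$, the monoid $\mathrm{rps}_n$ satisfies the identity $(xy)^{n+1}=(xy)^n yx$.
   Context: Let $\mathcal{A}_n=\{1<2<\cdots<n\}$. An rPS tableau is a finite (possibly empty) sequence of nonempty bottom-justified columns of boxes filled with positive integers, such that the entries of each column are weakly decreasing from top to bottom and the bottom entries of the columns form a strictly increasing sequence from left to right. Right insertion of a symbol $a$ into an rPS tableau $B$: if $a$ is strictly greater than every entry of the bottom row, append a new column consisting of $a$ at the right end; otherwise, let $z$ be the leftmost bottom-row entry with $z\geq a$ and put $a$ in a new box at the bottom of the column of $z$ (the previous entries of that column move up one box). For $w=w_1\cdots w_k$, $\mathfrak{R}_r(w)$ is obtained by starting with the empty tableau and right-inserting $w_1,\dots,w_k$ in order. The monoid $\mathrm{rps}_n$ is the quotient of $\mathcal{A}_n^*$ by the congruence $u\equiv v\iff\mathfrak{R}_r(u)=\mathfrak{R}_r(v)$. A monoid $M$ satisfies the identity $u(x,y)=v(x,y)$ if equality holds in $M$ for every substitution of elements of $M$ for the variables $x,y$. *)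

theory Defs
  imports Main
begin

(* An rPS tableau is a list of columns, left to right.  Each column is a
   nonempty list of entries listed from TOP to BOTTOM, so the bottom entry
   of a column is its last element. *)
type_synonym rps_tableau = "nat list list"

definition is_rps_tableau :: "rps_tableau \<Rightarrow> bool" where
  "is_rps_tableau T \<longleftrightarrow>
     (\<forall>c \<in> set T. c \<noteq> [] \<and> sorted_wrt (\<ge>) c \<and> (\<forall>a\<in>set c. 0 < a)) \<and>
     sorted_wrt (<) (map last T)"

fun rps_insert :: "nat \<Rightarrow> rps_tableau \<Rightarrow> rps_tableau" where
  "rps_insert a [] = [[a]]"
| "rps_insert a (c # T) =
     (if a \<le> last c then (c @ [a]) # T else c # rps_insert a T)"

definition rps_tab :: "nat list \<Rightarrow> rps_tableau" where
  "rps_tab w = fold rps_insert w []"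

definition words :: "nat \<Rightarrow> nat list set" where
  "words n = {w. set w \<subseteq> {1..n}}"

definition rps_equiv :: "nat list \<Rightarrow> nat list \<Rightarrow> bool" where
  "rps_equiv u v \<longleftrightarrow> rps_tab u = rps_tab v"

definition rps_monoid :: "nat \<Rightarrow> nat list set set" where
  "rps_monoid n = words n // {(u, v). rps_equiv u v}"

definition wpow :: "nat list \<Rightarrow> nat \<Rightarrow> nat list" where
  "wpow w k = concat (replicate k w)"

end

theory Submission
  imports Defs
begin

text \<open>Insertion never removes a bottom-row entry \<open>\<le> v\<close> without putting a smaller one in its
place, so the number of bottom-row entries \<open>< v\<close> never decreases. Inserting the whole word
\<open>w\<close> once raises that number by one as long as it is below the number of distinct letters
\<open>< v\<close> in \<open>w\<close> (look at the largest such letter). Hence after \<open>(xy)\<^sup>n\<close> every letter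
of \<open>xy\<close> sits in the bottom row, as \<open>xy\<close> has at most \<open>n\<close> distinct letters. From then on
the bottom row is frozen and each inserted letter merely lengthens the column it labels,
so inserting \<open>xy\<close> and \<open>yx\<close> gives the same tableau.\<close>

abbreviation bottom_row :: "rps_tableau \<Rightarrow> nat list" where
  "bottom_row T \<equiv> map last T"

lemma set_bottom_row_rps_insert: "set (bottom_row (rps_insert a T)) \<subseteq> insert a (set (bottom_row T))"
  by (induction T) auto

lemma set_bottom_row_fold_rps_insert:
  "set (bottom_row (fold rps_insert u T)) \<subseteq> set u \<union> set (bottom_row T)"
proof (induction u arbitrary: T)
  case (Cons a u)
  show ?case using Cons[of "rps_insert a T"] set_bottom_row_rps_insert[of a T] by auto
qed simp

lemma sorted_bottom_row_rps_insert:
  "sorted_wrt (<) (bottom_row T) \<Longrightarrow> sorted_wrt (<) (bottom_row (rps_insert a T))"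
proof (induction T)
  case (Cons c T)
  then show ?case using set_bottom_row_rps_insert[of a T] by force
qed simp

lemma sorted_bottom_row_fold_rps_insert:
  "sorted_wrt (<) (bottom_row T) \<Longrightarrow> sorted_wrt (<) (bottom_row (fold rps_insert u T))"
  by (induction u arbitrary: T) (auto intro: sorted_bottom_row_rps_insert)

lemma rps_insert_bottom_letter:
  assumes "sorted_wrt (<) (bottom_row T)" and "a \<in> set (bottom_row T)"
  shows "rps_insert a T = map (\<lambda>c. if last c = a then c @ [a] else c) T"
  using assms
proof (induction T)
  case (Cons c T)
  show ?case
  proof (cases "a = last c")
    case True
    with Cons.prems have "map (\<lambda>c. if last c = a then c @ [a] else c) T = T"
      by (intro map_idI) force
    with True show ?thesis by simp
  next
    case False
    with Cons show ?thesis by auto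
  qed
qed simp

lemma last_append_filter_last: "last (c @ filter (\<lambda>s. s = last c) u) = last c"
  by (cases "filter (\<lambda>s. s = last c) u = []") (auto simp: last_append dest: last_in_set)

lemma fold_rps_insert_bottom_letters:
  assumes "sorted_wrt (<) (bottom_row T)" and "set u \<subseteq> set (bottom_row T)"
  shows "fold rps_insert u T = map (\<lambda>c. c @ filter (\<lambda>s. s = last c) u) T"
  using assms(2)
proof (induction u rule: rev_induct)
  case (snoc a u)
  let ?T = "map (\<lambda>c. c @ filter (\<lambda>s. s = last c) u) T"
  have bottom_row_eq: "bottom_row ?T = bottom_row T"
    by (simp add: last_append_filter_last comp_def)
  have "rps_insert a ?T = map (\<lambda>c. if last c = a then c @ [a] else c) ?T"
    using assms(1) snoc.prems by (intro rps_insert_bottom_letter) (simp_all only: bottom_row_eq, auto)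
  with snoc show ?case by (auto simp: last_append_filter_last)
qed simp

lemma filter_eq_replicate_count_list:
  "filter (\<lambda>s. s = b) xs = replicate (count_list xs b) b"
  by (induction xs) auto

definition bottom_count :: "(nat \<Rightarrow> bool) \<Rightarrow> rps_tableau \<Rightarrow> nat" where
  "bottom_count P T = length (filter P (bottom_row T))"

lemma bottom_count_mono:
  "(\<And>s. P s \<Longrightarrow> Q s) \<Longrightarrow> bottom_count P T \<le> bottom_count Q T"
  unfolding bottom_count_def by (induction T) auto

lemma bottom_count_rps_insert_mono:
  assumes "\<And>s t. s \<le> t \<Longrightarrow> P t \<Longrightarrow> P s"
  shows "bottom_count P T \<le> bottom_count P (rps_insert a T)"
  unfolding bottom_count_def by (induction T) (auto dest: assms)

lemma bottom_count_fold_rps_insert_mono: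
  assumes "\<And>s t. s \<le> t \<Longrightarrow> P t \<Longrightarrow> P s"
  shows "bottom_count P T \<le> bottom_count P (fold rps_insert u T)"
  by (induction u arbitrary: T) (auto intro: le_trans[OF bottom_count_rps_insert_mono] assms)

lemma bottom_count_rps_insert_less:
  "bottom_count (\<lambda>s. s < a) T < bottom_count (\<lambda>s. s \<le> a) (rps_insert a T)"
proof (induction T)
  case (Cons c T)
  have "bottom_count (\<lambda>s. s < a) T \<le> bottom_count (\<lambda>s. s \<le> a) T"
    by (rule bottom_count_mono) simp
  with Cons show ?case by (auto simp: bottom_count_def)
qed (simp add: bottom_count_def)

lemma wpow_Suc: "wpow w (Suc k) = wpow w k @ w"
  unfolding wpow_def by (induction k) auto

lemma bottom_count_less_fold_round:
  assumes previous_rounds: "\<And>v. min k (card {l \<in> set w. l < v}) \<le> bottom_count (\<lambda>s. s < v) T"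
  shows "min (Suc k) (card {l \<in> set w. l < v}) \<le> bottom_count (\<lambda>s. s < v) (fold rps_insert w T)"
proof (cases "{l \<in> set w. l < v} = {}")
  case False
  define a where "a = Max {l \<in> set w. l < v}"
  have a: "a \<in> set w" "a < v"
    using Max_in[of "{l \<in> set w. l < v}"] False unfolding a_def by auto
  have "{l \<in> set w. l < v} = insert a {l \<in> set w. l < a}"
    using a Max_ge[of "{l \<in> set w. l < v}"] unfolding a_def by fastforce
  then have card_less_v: "card {l \<in> set w. l < v} = Suc (card {l \<in> set w. l < a})"
    by simp
  obtain u1 u2 where w: "w = u1 @ a # u2"
    using a(1) by (meson split_list)
  let ?T1 = "fold rps_insert u1 T"
  have "min k (card {l \<in> set w. l < a}) \<le> bottom_count (\<lambda>s. s < a) T"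
    by (rule previous_rounds)
  also have "\<dots> \<le> bottom_count (\<lambda>s. s < a) ?T1"
    by (rule bottom_count_fold_rps_insert_mono) auto
  also have "\<dots> < bottom_count (\<lambda>s. s \<le> a) (rps_insert a ?T1)"
    by (rule bottom_count_rps_insert_less)
  also have "\<dots> \<le> bottom_count (\<lambda>s. s \<le> a) (fold rps_insert u2 (rps_insert a ?T1))"
    by (rule bottom_count_fold_rps_insert_mono) auto
  also have "\<dots> \<le> bottom_count (\<lambda>s. s < v) (fold rps_insert u2 (rps_insert a ?T1))"
    using a(2) by (intro bottom_count_mono) auto
  also have "fold rps_insert u2 (rps_insert a ?T1) = fold rps_insert w T"
    by (simp add: w)
  finally show ?thesis
    using card_less_v by simp
qed (simp only: card.empty)

lemma bottom_count_less_fold_wpow: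
  "min k (card {l \<in> set w. l < v}) \<le> bottom_count (\<lambda>s. s < v) (fold rps_insert (wpow w k) T)"
proof (induction k arbitrary: v)
  case (Suc k)
  then show ?case
    using bottom_count_less_fold_round[of k w "fold rps_insert (wpow w k) T" v]
    by (simp add: wpow_Suc)
qed simp

lemma set_bottom_row_rps_tab_wpow:
  assumes "card (set w) \<le> k"
  shows "set (bottom_row (rps_tab (wpow w k))) = set w"
proof -
  let ?T = "rps_tab (wpow w k)"
  have sorted: "sorted_wrt (<) (bottom_row ?T)"
    unfolding rps_tab_def by (rule sorted_bottom_row_fold_rps_insert) simp
  have subset: "set (bottom_row ?T) \<subseteq> set w"
    using set_bottom_row_fold_rps_insert[of "wpow w k" "[]"]
    by (auto simp: rps_tab_def wpow_def)
  have "{l \<in> set w. l < Suc (Max (set w))} = set w"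
    by (auto simp: le_imp_less_Suc)
  then have "card (set w) = min k (card {l \<in> set w. l < Suc (Max (set w))})"
    using assms by simp
  also have "\<dots> \<le> bottom_count (\<lambda>s. s < Suc (Max (set w))) ?T"
    unfolding rps_tab_def by (rule bottom_count_less_fold_wpow)
  also have "\<dots> \<le> length (bottom_row ?T)"
    by (simp add: bottom_count_def)
  also have "\<dots> = card (set (bottom_row ?T))"
    using sorted by (metis distinct_card strict_sorted_iff)
  finally show ?thesis
    using subset by (intro card_seteq) auto
qed

lemma fold_rps_insert_append_commute:
  assumes "sorted_wrt (<) (bottom_row T)" and "set x \<union> set y \<subseteq> set (bottom_row T)"
  shows "fold rps_insert (x @ y) T = fold rps_insert (y @ x) T"
  using assms fold_rps_insert_bottom_letters[of T "x @ y"] fold_rps_insert_bottom_letters[of T "y @ x"]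
  by (simp add: filter_eq_replicate_count_list add.commute)

lemma rps_tab_append: "rps_tab (u @ v) = fold rps_insert v (rps_tab u)"
  by (simp add: rps_tab_def)

theorem proposition4p7:
  fixes n :: nat
  shows "\<forall>x \<in> words n. \<forall>y \<in> words n.
           rps_equiv (wpow (x @ y) (n + 1)) (wpow (x @ y) n @ y @ x)"
proof (intro ballI)
  fix x y assume "x \<in> words n" and "y \<in> words n"
  then have "set (x @ y) \<subseteq> {1..n}"
    by (simp add: words_def)
  then have "card (set (x @ y)) \<le> n"
    using card_mono[of "{1..n}"] by fastforce
  then have letters: "set (bottom_row (rps_tab (wpow (x @ y) n))) = set (x @ y)"
    by (rule set_bottom_row_rps_tab_wpow)
  have sorted: "sorted_wrt (<) (bottom_row (rps_tab (wpow (x @ y) n)))"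
    unfolding rps_tab_def by (rule sorted_bottom_row_fold_rps_insert) simp
  have "rps_tab (wpow (x @ y) (n + 1)) = fold rps_insert (x @ y) (rps_tab (wpow (x @ y) n))"
    by (simp add: wpow_Suc rps_tab_append)
  also have "\<dots> = fold rps_insert (y @ x) (rps_tab (wpow (x @ y) n))"
    using sorted letters by (intro fold_rps_insert_append_commute) auto
  also have "\<dots> = rps_tab (wpow (x @ y) n @ y @ x)"
    by (simp add: rps_tab_append)
  finally show "rps_equiv (wpow (x @ y) (n + 1)) (wpow (x @ y) n @ y @ x)"
    unfolding rps_equiv_def .
qed

end
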